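(* Fix $\alpha\in[0,1]$ and let $f:[0,1]\to[0,1]$ satisfy $\left(1-\int_0^x\frac{dx'}{f(x')}\right)f(x)\le\alpha$ for all $x\in[0,1]$. Then $\int_0^{\alpha\log(1/\alpha)}\frac{dx}{f(x)}\ge 1-\alpha$.
   Context: $\log$ denotes the natural logarithm. *)

theory Defs
  imports "HOL-Analysis.Analysis"
begin

text \<open>The integral from 0 to x of 1/f, as an extended nonnegative real (Lebesgue).
  Division by zero is interpreted as +infinity (ennreal inverse 0 = top).\<close>
definition inv_int :: "(real \<Rightarrow> real) \<Rightarrow> real \<Rightarrow> ennreal" where
  "inv_int f x = (\<integral>\<^sup>+ t\<in>{0..x}. inverse (ennreal (f t)) \<partial>lborel)"

end

theory Submission
  imports Defs
begin

text \<open>Write \<open>F x = \<integral>\<^sub>0\<^sup>x 1/f\<close> and \<open>T = \<alpha> ln (1/\<alpha>)\<close>; we may assume \<open>F T < 1\<close>.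
  For \<open>a < t \<le> b \<le> T\<close> the hypothesis and monotonicity of \<open>F\<close> give
  \<open>1/f t \<ge> (1 - F b)/\<alpha>\<close>, so \<open>F b \<ge> F a + (b - a)(1 - F b)/\<alpha>\<close>, i.e.
  \<open>(1 - F b)(1 + (b - a)/\<alpha>) \<le> 1 - F a\<close>. Iterating this over \<open>n\<close> equal subintervals of
  \<open>[0, T]\<close> and letting \<open>n \<rightarrow> \<infinity>\<close> yields \<open>(1 - F T) exp (T/\<alpha>) \<le> 1 - F 0 \<le> 1\<close>,
  and \<open>exp (T/\<alpha>) = 1/\<alpha>\<close>.\<close>

lemma borel_measurable_inverse_ennreal_indicator:
  fixes f :: "real \<Rightarrow> real"
  assumes "set_borel_measurable borel A f" "A \<in> sets borel"
  shows "(\<lambda>t. inverse (ennreal (f t)) * indicator A t) \<in> borel_measurable lborel"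
proof -
  define fA where "fA t = indicator A t *\<^sub>R f t" for t
  have "fA \<in> borel_measurable borel"
    using assms(1) unfolding fA_def set_borel_measurable_def .
  then have "(\<lambda>t. inverse (ennreal (fA t)) * indicator A t) \<in> borel_measurable lborel"
    using assms(2) by measurable
  also have "(\<lambda>t. inverse (ennreal (fA t)) * indicator A t) = (\<lambda>t. inverse (ennreal (f t)) * indicator A t)"
    by (auto simp: fA_def indicator_def)
  finally show ?thesis .
qed

lemma inv_int_mono:
  assumes "a \<le> b"
  shows "inv_int f a \<le> inv_int f b"
  unfolding inv_int_def
  using assms by (intro nn_integral_mono) (auto simp: indicator_def)

lemma inv_int_add_le:
  fixes f :: "real \<Rightarrow> real" and c :: ennreal
  assumes "set_borel_measurable borel {0..b} f" "0 \<le> a" "a \<le> b"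
    and "\<And>t. a < t \<Longrightarrow> t \<le> b \<Longrightarrow> c \<le> inverse (ennreal (f t))"
  shows "inv_int f a + c * ennreal (b - a) \<le> inv_int f b"
proof -
  let ?g = "\<lambda>t. inverse (ennreal (f t))"
  have "set_borel_measurable borel {0..a} f"
    using assms(3) by (intro set_borel_measurable_subset[OF assms(1)]) auto
  then have meas: "(\<lambda>t. ?g t * indicator {0..a} t) \<in> borel_measurable lborel"
    by (rule borel_measurable_inverse_ennreal_indicator) simp
  have "inv_int f a + c * ennreal (b - a)
      = (\<integral>\<^sup>+ t. ?g t * indicator {0..a} t \<partial>lborel) + (\<integral>\<^sup>+ t. c * indicator {a<..b} t \<partial>lborel)"
    using assms(3) by (simp add: inv_int_def nn_integral_cmult_indicator)
  also have "\<dots> = (\<integral>\<^sup>+ t. ?g t * indicator {0..a} t + c * indicator {a<..b} t \<partial>lborel)"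
    using meas by (intro nn_integral_add[symmetric]) auto
  also have "\<dots> \<le> (\<integral>\<^sup>+ t. ?g t * indicator {0..b} t \<partial>lborel)"
    using assms(2-4) by (intro nn_integral_mono) (auto simp: indicator_def)
  also have "\<dots> = inv_int f b"
    by (simp add: inv_int_def)
  finally show ?thesis .
qed

lemma inv_int_step_ineq:
  fixes f :: "real \<Rightarrow> real" and \<alpha> a b :: real
  assumes "0 < \<alpha>" "set_borel_measurable borel {0..b} f" "0 \<le> a" "a \<le> b"
    and hyp: "\<forall>t\<in>{a<..b}. (1 - inv_int f t) * ennreal (f t) \<le> ennreal \<alpha>"
    and "inv_int f b < 1"
  shows "(1 - enn2real (inv_int f b)) * (1 + (b - a) / \<alpha>) \<le> 1 - enn2real (inv_int f a)"
proof -
  define r where "r = enn2real (inv_int f b)"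
  have r: "0 \<le> r" "inv_int f b = ennreal r"
    using less_le_trans[OF \<open>inv_int f b < 1\<close> top_greatest] by (simp_all add: r_def)
  define c where "c = (1 - r) / \<alpha>"
  have "ennreal c \<le> inverse (ennreal (f t))" if t: "a < t" "t \<le> b" for t
  proof (cases "f t \<le> 0")
    case True
    show ?thesis by (simp add: ennreal_neg[OF True])
  next
    case False
    have "ennreal (1 - r) = 1 - inv_int f b"
      using ennreal_minus[OF r(1), of 1] by (simp add: r(2))
    also have "\<dots> \<le> 1 - inv_int f t"
      using t by (intro ennreal_minus_mono inv_int_mono) auto
    finally have "ennreal ((1 - r) * f t) \<le> ennreal \<alpha>"
      using hyp t False
      by (auto simp: ennreal_mult'' intro: order.trans[OF mult_right_mono])
    then have "(1 - r) * f t \<le> \<alpha>"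
      using \<open>0 < \<alpha>\<close> by simp
    then have "c \<le> inverse (f t)"
      using False \<open>0 < \<alpha>\<close> by (simp add: c_def field_simps)
    then show ?thesis
      using False by (simp add: inverse_ennreal)
  qed
  then have "inv_int f a + ennreal c * ennreal (b - a) \<le> inv_int f b"
    using assms(2-4) by (intro inv_int_add_le)
  moreover have "inv_int f a < top"
    using inv_int_mono[OF assms(4), of f] r(2) by (simp add: le_less_trans)
  moreover have "0 \<le> c"
    using \<open>inv_int f b < 1\<close> r \<open>0 < \<alpha>\<close> by (simp add: c_def)
  ultimately have "ennreal (enn2real (inv_int f a) + c * (b - a)) \<le> ennreal r"
    using assms(4) r(2) by (simp add: ennreal_plus[symmetric] ennreal_mult'')
  then have "enn2real (inv_int f a) + c * (b - a) \<le> r"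
    using r(1) by simp
  then show ?thesis
    using \<open>0 < \<alpha>\<close> unfolding r_def c_def by (simp add: field_simps)
qed

lemma exp_decay_of_step_ineq:
  fixes g :: "real \<Rightarrow> real" and k T :: real
  assumes "0 \<le> k" "0 \<le> T"
    and step: "\<And>a b. 0 \<le> a \<Longrightarrow> a \<le> b \<Longrightarrow> b \<le> T \<Longrightarrow> g b * (1 + k * (b - a)) \<le> g a"
  shows "g T * exp (k * T) \<le> g 0"
proof -
  have Euler: "g T * (1 + k * T / real n) ^ n \<le> g 0" if "n > 0" for n
  proof -
    define h where "h = T / real n"
    have h: "0 \<le> h" "real n * h = T"
      using assms(2) that by (auto simp: h_def)
    have "g (real m * h) * (1 + k * h) ^ m \<le> g 0" if "m \<le> n" for m
      using that
    proof (induction m)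
      case 0
      show ?case by simp
    next
      case (Suc m)
      have "real (Suc m) * h \<le> T"
        using Suc.prems h by (metis mult_right_mono of_nat_le_iff)
      then have "g (real (Suc m) * h) * (1 + k * h) \<le> g (real m * h)"
        using step[of "real m * h" "real (Suc m) * h"] h by (simp add: algebra_simps)
      then have "g (real (Suc m) * h) * (1 + k * h) ^ Suc m \<le> g (real m * h) * (1 + k * h) ^ m"
        using assms(1) h by (simp add: mult.assoc[symmetric] mult_right_mono)
      with Suc show ?case by simp
    qed
    from this[of n] h show ?thesis by (simp add: h_def)
  qed
  have "(\<lambda>n. g T * (1 + k * T / real n) ^ n) \<longlonglongrightarrow> g T * exp (k * T)"
    by (intro tendsto_mult tendsto_const tendsto_exp_limit_sequentially)
  then show ?thesis
    by (rule LIMSEQ_le_const2) (use Euler in \<open>auto intro: exI[of _ 1]\<close>)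
qed

lemma inv_int_exp_decay:
  fixes f :: "real \<Rightarrow> real" and \<alpha> T :: real
  assumes "0 < \<alpha>" "0 \<le> T" "set_borel_measurable borel {0..T} f"
    and hyp: "\<forall>t\<in>{0<..T}. (1 - inv_int f t) * ennreal (f t) \<le> ennreal \<alpha>"
    and "inv_int f T < 1"
  shows "(1 - enn2real (inv_int f T)) * exp (T / \<alpha>) \<le> 1"
proof -
  define g where "g x = 1 - enn2real (inv_int f x)" for x
  have "g b * (1 + (b - a) / \<alpha>) \<le> g a" if "0 \<le> a" "a \<le> b" "b \<le> T" for a b
    unfolding g_def
  proof (rule inv_int_step_ineq)
    show "set_borel_measurable borel {0..b} f"
      using that by (intro set_borel_measurable_subset[OF assms(3)]) auto
    show "\<forall>t\<in>{a<..b}. (1 - inv_int f t) * ennreal (f t) \<le> ennreal \<alpha>"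
      using hyp that by auto
    show "inv_int f b < 1"
      using inv_int_mono[OF \<open>b \<le> T\<close>] \<open>inv_int f T < 1\<close> by (rule le_less_trans)
  qed (use that \<open>0 < \<alpha>\<close> in auto)
  then have "g T * exp ((1 / \<alpha>) * T) \<le> g 0"
    using assms(1,2) by (intro exp_decay_of_step_ineq) simp_all
  also have "g 0 \<le> 1"
    by (simp add: g_def)
  finally show ?thesis
    by (simp add: g_def)
qed

theorem lemma7:
  fixes f :: "real \<Rightarrow> real" and \<alpha> :: real
  assumes "0 < \<alpha>" and "\<alpha> \<le> 1"
    and "set_borel_measurable borel {0..1} f"
    and "\<forall>x\<in>{0..1}. 0 \<le> f x \<and> f x \<le> 1"
    and "\<forall>x\<in>{0..1}. (1 - inv_int f x) * ennreal (f x) \<le> ennreal \<alpha>"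
  shows "inv_int f (\<alpha> * ln (1 / \<alpha>)) \<ge> ennreal (1 - \<alpha>)"
proof -
  define T where "T = \<alpha> * ln (1 / \<alpha>)"
  have T: "0 \<le> T" "T \<le> 1"
    using \<open>0 < \<alpha>\<close> \<open>\<alpha> \<le> 1\<close> ln_le_minus_one[of "1 / \<alpha>"]
    by (auto simp: T_def field_simps)
  show ?thesis
  proof (cases "inv_int f T < 1")
    case False
    then show ?thesis
      using \<open>0 < \<alpha>\<close> by (auto simp: T_def not_less intro: order.trans[rotated])
  next
    case True
    have "(1 - enn2real (inv_int f T)) * exp (T / \<alpha>) \<le> 1"
      using assms(1,3,5) T True
      by (intro inv_int_exp_decay set_borel_measurable_subset[OF assms(3)]) auto
    moreover have "exp (T / \<alpha>) = 1 / \<alpha>"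
      using \<open>0 < \<alpha>\<close> by (simp add: T_def)
    ultimately have "1 - \<alpha> \<le> enn2real (inv_int f T)"
      using \<open>0 < \<alpha>\<close> by (simp add: field_simps)
    then have "ennreal (1 - \<alpha>) \<le> ennreal (enn2real (inv_int f T))"
      by (rule ennreal_leI)
    also have "\<dots> = inv_int f T"
      using less_le_trans[OF True top_greatest] by simp
    finally show ?thesis
      by (simp add: T_def)
  qed
qed

end
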